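(* Let $\rho_{\rm up},\rho_{\rm low}\in[0,1]$. Suppose there is an element-based generator $\mathds{G}_{\rm vanilla}$ that, for any countable collection $\mathcal{L}$, generates from $\mathcal{L}$ in the limit with element-based upper (respectively lower) density $\rho_{\rm up}$ (respectively $\rho_{\rm low}$) under enumerations with no noise and no omissions. Then there exists an element-based generator $\mathds{G}_{\rm tolerant}$ that, for any countable collection $\mathcal{L}$, generates from $\mathcal{L}$ in the limit with element-based upper (respectively lower) density $\rho_{\rm up}$ (respectively $\rho_{\rm low}$) under enumerations with finite noise and finite omissions.
   Context: The universe is $U=\mathbb{N}$ with its natural order. A language is an infinite subset of $U$; a collection is a countable family of languages. For $A,B\subseteq\mathbb{N}$ with $B=\{b_1<b_2<\cdots\}$, $\mu_{\rm up}(A,B)=\limsup_n\frac1n|A\cap\{b_1,\dots,b_n\}|$ and $\mu_{\rm low}(A,B)=\liminf_n\frac1n|A\cap\{b_1,\dots,b_n\}|$. An enumeration of $K$ with no noise and no omissions lists every element of $K$ exactly once and nothing else; an enumeration of $K$ with finite noise and finite omissions is a sequence of distinct elements listing every element of some $\hat K\subseteq K$ with $|K\setminus\hat K|<\infty$ and only finitely many elements outside $\hat K$. An element-based generator outputs at step $n$, from $x_1,\dots,x_n$ and knowledge of $\mathcal{L}$ (not $K$), an element $w_n\notin\{x_1,\dots,x_n,w_1,\dots,w_{n-1}\}$. It generates in the limit if for every $K\in\mathcal{L}$ and admissible enumeration there is $n^\star$ with $w_n\in K$ for $n\ge n^\star$; with element-based upper (lower) density $\rho$ if additionally $\mu_{\rm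 up}(W,K)\ge\rho$ ($\mu_{\rm low}(W,K)\ge\rho$), where $W=\{w_1,w_2,\dots\}$. *)

theory Defs
  imports Main "HOL-Library.Infinite_Set" "HOL-Library.Liminf_Limsup" "HOL-Library.Extended_Real"
begin

text \<open>Counting density of A relative to B = {b_1 < b_2 < ...} (B infinite);
  enumerate B is the increasing enumeration of B, indexed from 0.\<close>
definition mu_up :: "nat set \<Rightarrow> nat set \<Rightarrow> ereal" where
  "mu_up A B = limsup (\<lambda>n. ereal (real (card (A \<inter> enumerate B ` {..<Suc n})) / real (Suc n)))"

definition mu_low :: "nat set \<Rightarrow> nat set \<Rightarrow> ereal" where
  "mu_low A B = liminf (\<lambda>n. ereal (real (card (A \<inter> enumerate B ` {..<Suc n})) / real (Suc n)))"

definition collection :: "(nat \<Rightarrow> nat set) \<Rightarrow> bool" where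
  "collection L \<longleftrightarrow> (\<forall>i. infinite (L i))"

text \<open>A generator maps the collection and the prefix [x_0..x_n] to the output w_n.\<close>
type_synonym generator = "(nat \<Rightarrow> nat set) \<Rightarrow> nat list \<Rightarrow> nat"

definition gen_out :: "generator \<Rightarrow> (nat \<Rightarrow> nat set) \<Rightarrow> (nat \<Rightarrow> nat) \<Rightarrow> nat \<Rightarrow> nat" where
  "gen_out G L x n = G L (map x [0..<Suc n])"

definition element_based :: "generator \<Rightarrow> bool" where
  "element_based G \<longleftrightarrow> (\<forall>L x n. gen_out G L x n \<notin> x ` {..n} \<and>
                                  gen_out G L x n \<notin> gen_out G L x ` {..<n})"

definition enum_exact :: "nat set \<Rightarrow> (nat \<Rightarrow> nat) \<Rightarrow> bool" where
  "enum_exact K x \<longleftrightarrow> inj x \<and> range x = K"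

definition enum_tolerant :: "nat set \<Rightarrow> (nat \<Rightarrow> nat) \<Rightarrow> bool" where
  "enum_tolerant K x \<longleftrightarrow> inj x \<and>
     (\<exists>Kh. Kh \<subseteq> K \<and> finite (K - Kh) \<and> Kh \<subseteq> range x \<and> finite (range x - Kh))"

definition generates_density ::
  "(nat set \<Rightarrow> nat set \<Rightarrow> ereal) \<Rightarrow> real \<Rightarrow> (nat set \<Rightarrow> (nat \<Rightarrow> nat) \<Rightarrow> bool)
    \<Rightarrow> generator \<Rightarrow> (nat \<Rightarrow> nat set) \<Rightarrow> bool" where
  "generates_density mu rho adm G L \<longleftrightarrow>
     (\<forall>K \<in> range L. \<forall>x. adm K x \<longrightarrow>
        (\<exists>n0. \<forall>n\<ge>n0. gen_out G L x n \<in> K) \<and>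
        mu (range (gen_out G L x)) K \<ge> ereal rho)"

end

theory Submission
  imports Defs "HOL-Analysis.Analysis" "HOL-Library.Countable"
begin

text \<open>A tolerant enumeration of \<open>K\<close> is an exact enumeration of its own range, a finite
  modification of \<open>K\<close>. The finite modifications of the languages of a countable collection
  again form a countable collection, so the tolerant generator runs the given generator on
  that larger collection. Outputs are pairwise distinct, so only finitely many of them fall
  into the finite set \<open>range x - K\<close>; and both densities are invariant under finite changes of
  the reference language, because adding one element to it shifts the counts in every
  prefix by at most one.\<close>

lemma image_enumerate_lessThan_Suc:
  "enumerate S ` {..<Suc n} = insert (enumerate S 0) (enumerate (S - {enumerate S 0}) ` {..<n})"
proof -
  have "enumerate S ` {..<Suc n} = insert (enumerate S 0) (enumerate S ` Suc ` {..<n})"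
    by (simp add: lessThan_Suc_eq_insert_0)
  also have "enumerate S ` Suc ` {..<n} = enumerate (S - {enumerate S 0}) ` {..<n}"
    by (simp add: image_image enumerate_Suc')
  finally show ?thesis .
qed

lemma image_enumerate_insert:
  fixes K :: "nat set"
  assumes "infinite K" "a \<notin> K" "card {k\<in>K. k < a} \<le> n"
  shows "enumerate (insert a K) ` {..<Suc n} = insert a (enumerate K ` {..<n})"
  using assms
proof (induction "card {k\<in>K. k < a}" arbitrary: K n)
  case 0
  then have "\<forall>k\<in>K. a < k" by (auto simp: card_eq_0_iff not_less_iff_gr_or_eq)
  then have "enumerate (insert a K) 0 = a"
    by (simp add: enumerate_0) (rule Least_equality, auto simp: less_imp_le)
  moreover have "insert a K - {a} = K" using 0 by auto
  ultimately show ?case using image_enumerate_lessThan_Suc[of "insert a K" n] by simp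
next
  case (Suc m)
  define k0 where "k0 = enumerate K 0"
  have k0K: "k0 \<in> K" unfolding k0_def using Suc.prems(1) by (rule enumerate_in_set)
  have k0_least: "k0 \<le> y" if "y \<in> K" for y unfolding k0_def using that by (simp add: enumerate_0 Least_le)
  obtain k where "k \<in> K" "k < a"
    by (metis (mono_tags, lifting) Suc.hyps(2) card.empty empty_Collect_eq nat.distinct(1))
  then have k0a: "k0 < a" using k0_least by fastforce
  have e0: "enumerate (insert a K) 0 = k0"
    unfolding enumerate_0 by (rule Least_equality) (use k0K k0_least k0a in auto)
  obtain n' where n: "n = Suc n'" using Suc.hyps(2) Suc.prems(3) by (cases n) auto
  have "{k\<in>K - {k0}. k < a} = {k\<in>K. k < a} - {k0}" by auto
  then have "m = card {k\<in>K - {k0}. k < a}" using Suc.hyps(2) k0K k0a by simp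
  then have IH: "enumerate (insert a (K - {k0})) ` {..<Suc n'} = insert a (enumerate (K - {k0}) ` {..<n'})"
    using Suc.hyps(1) Suc.prems Suc.hyps(2) n by simp
  have "insert a K - {k0} = insert a (K - {k0})" using k0a by auto
  then have "enumerate (insert a K) ` {..<Suc n} = insert k0 (insert a (enumerate (K - {k0}) ` {..<n'}))"
    using image_enumerate_lessThan_Suc[of "insert a K" n] e0 IH n by simp
  also have "\<dots> = insert a (enumerate K ` {..<n})"
    using image_enumerate_lessThan_Suc[of K n'] n k0_def by auto
  finally show ?case .
qed

lemma card_Int_insert_le_Suc:
  assumes "finite E"
  shows "card (W \<inter> insert x E) \<le> Suc (card (W \<inter> E))"
proof -
  have "card (W \<inter> insert x E) \<le> card (insert x (W \<inter> E))"
    by (rule card_mono) (use assms in auto)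
  also have "\<dots> \<le> Suc (card (W \<inter> E))" by (simp add: card_insert_if assms)
  finally show ?thesis .
qed

lemma ereal_limsup_liminf_eq_if_diff_tendsto_0:
  fixes f g :: "nat \<Rightarrow> real"
  assumes "(\<lambda>n. g n - f n) \<longlonglongrightarrow> 0"
  shows "limsup (\<lambda>n. ereal (g n)) = limsup (\<lambda>n. ereal (f n))"
    and "liminf (\<lambda>n. ereal (g n)) = liminf (\<lambda>n. ereal (f n))"
proof -
  have diff: "(\<lambda>n. ereal (g n - f n)) \<longlonglongrightarrow> 0"
    using assms by (simp add: zero_ereal_def tendsto_ereal)
  have g: "(\<lambda>n. ereal (g n)) = (\<lambda>n. ereal (g n - f n) + ereal (f n))" by simp
  show "limsup (\<lambda>n. ereal (g n)) = limsup (\<lambda>n. ereal (f n))"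
    unfolding g by (subst ereal_limsup_lim_add[OF diff]) auto
  show "liminf (\<lambda>n. ereal (g n)) = liminf (\<lambda>n. ereal (f n))"
    unfolding g by (subst ereal_liminf_lim_add[OF diff]) auto
qed

definition prefix_density :: "nat set \<Rightarrow> nat set \<Rightarrow> nat \<Rightarrow> real" where
  "prefix_density W K n = real (card (W \<inter> enumerate K ` {..<Suc n})) / real (Suc n)"

lemma mu_up_eq_limsup_prefix_density: "mu_up W K = limsup (\<lambda>n. ereal (prefix_density W K n))"
  by (simp add: mu_up_def prefix_density_def)

lemma mu_low_eq_liminf_prefix_density: "mu_low W K = liminf (\<lambda>n. ereal (prefix_density W K n))"
  by (simp add: mu_low_def prefix_density_def)

lemma prefix_density_insert_diff_tendsto_0:
  fixes K :: "nat set"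
  assumes "infinite K" "a \<notin> K"
  shows "(\<lambda>n. prefix_density W (insert a K) n - prefix_density W K n) \<longlonglongrightarrow> 0"
proof (rule Lim_null_comparison[OF _ LIMSEQ_inverse_real_of_nat])
  show "\<forall>\<^sub>F n in sequentially.
          norm (prefix_density W (insert a K) n - prefix_density W K n) \<le> inverse (real (Suc n))"
    unfolding eventually_sequentially
  proof (intro exI allI impI)
    fix n assume n: "card {k\<in>K. k < a} \<le> n"
    define E where "E = enumerate K ` {..<n}"
    have "finite E" unfolding E_def by simp
    have "a \<notin> E" unfolding E_def using assms enumerate_in_set by blast
    have with_a: "enumerate (insert a K) ` {..<Suc n} = insert a E"
      unfolding E_def using image_enumerate_insert[OF assms n] .
    have without_a: "enumerate K ` {..<Suc n} = insert (enumerate K n) E"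
      unfolding E_def by (simp add: lessThan_Suc)
    have "card (W \<inter> E) \<le> card (W \<inter> insert b E)" for b
      by (rule card_mono) (use \<open>finite E\<close> in auto)
    then have "\<bar>real (card (W \<inter> insert a E)) - real (card (W \<inter> insert (enumerate K n) E))\<bar> \<le> 1"
      using card_Int_insert_le_Suc[OF \<open>finite E\<close>, of W] by (smt (verit) of_nat_Suc of_nat_mono)
    then show "norm (prefix_density W (insert a K) n - prefix_density W K n) \<le> inverse (real (Suc n))"
      unfolding prefix_density_def with_a without_a
      by (simp add: diff_divide_distrib[symmetric] inverse_eq_divide divide_right_mono)
  qed
qed

definition insert_invariant :: "(nat set \<Rightarrow> nat set \<Rightarrow> ereal) \<Rightarrow> bool" where
  "insert_invariant mu \<longleftrightarrow> (\<forall>W K a. infinite K \<longrightarrow> a \<notin> K \<longrightarrow> mu W (insert a K) = mu W K)"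

lemma insert_invariant_mu_up: "insert_invariant mu_up"
  unfolding insert_invariant_def mu_up_eq_limsup_prefix_density
  using ereal_limsup_liminf_eq_if_diff_tendsto_0(1)[OF prefix_density_insert_diff_tendsto_0] by blast

lemma insert_invariant_mu_low: "insert_invariant mu_low"
  unfolding insert_invariant_def mu_low_eq_liminf_prefix_density
  using ereal_limsup_liminf_eq_if_diff_tendsto_0(2)[OF prefix_density_insert_diff_tendsto_0] by blast

lemma insert_invariant_Un_finite:
  assumes "insert_invariant mu" "finite B" "infinite K"
  shows "mu W (K \<union> B) = mu W K"
  using assms(2)
proof (induction B rule: finite_induct)
  case (insert b B)
  show ?case
  proof (cases "b \<in> K \<union> B")
    case True
    then show ?thesis using insert.IH by (simp add: insert_absorb)
  next
    case False
    have "mu W (insert b (K \<union> B)) = mu W (K \<union> B)"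
      using assms(1,3) False unfolding insert_invariant_def by blast
    then show ?thesis using insert.IH by simp
  qed
qed simp

lemma insert_invariant_finite_modification:
  assumes "insert_invariant mu" "infinite K" "finite (K - K')" "finite (K' - K)"
  shows "mu W K' = mu W K"
proof -
  have "infinite (K \<inter> K')"
    using assms(2,3) by (metis Diff_Diff_Int Diff_infinite_finite inf_commute)
  then have "mu W ((K \<inter> K') \<union> B) = mu W (K \<inter> K')" if "finite B" for B
    using insert_invariant_Un_finite[OF assms(1) that] by blast
  moreover have "K' = (K \<inter> K') \<union> (K' - K)" "K = (K \<inter> K') \<union> (K - K')" by auto
  ultimately show ?thesis using assms(3,4) by metis
qed

lemma enum_tolerant_iff:
  "enum_tolerant K x \<longleftrightarrow> inj x \<and> finite (K - range x) \<and> finite (range x - K)"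
proof
  assume "enum_tolerant K x"
  then obtain Kh where "inj x" "Kh \<subseteq> K" "finite (K - Kh)" "Kh \<subseteq> range x" "finite (range x - Kh)"
    unfolding enum_tolerant_def by blast
  then show "inj x \<and> finite (K - range x) \<and> finite (range x - K)"
    by (meson Diff_mono finite_subset order_refl)
next
  assume "inj x \<and> finite (K - range x) \<and> finite (range x - K)"
  then show "enum_tolerant K x"
    unfolding enum_tolerant_def by (intro conjI exI[of _ "K \<inter> range x"]) (auto simp: Diff_Int)
qed

definition finite_variants :: "(nat \<Rightarrow> nat set) \<Rightarrow> nat \<Rightarrow> nat set" where
  "finite_variants L k =
     (case from_nat k :: nat \<times> nat list \<times> nat list of (i, as, bs) \<Rightarrow> (L i - set as) \<union> set bs)"

lemma collection_finite_variants: "collection L \<Longrightarrow> collection (finite_variants L)"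
  unfolding collection_def finite_variants_def by (auto split: prod.splits)

lemma finite_modification_in_finite_variants:
  assumes "finite A" "finite B"
  shows "(L i - A) \<union> B \<in> range (finite_variants L)"
proof -
  obtain as bs where "set as = A" "set bs = B" using assms finite_list by metis
  then have "finite_variants L (to_nat (i, as, bs)) = (L i - A) \<union> B"
    by (simp add: finite_variants_def)
  then show ?thesis by (metis rangeI)
qed

lemma element_based_inj_gen_out:
  assumes "element_based G"
  shows "inj (gen_out G L x)"
proof (rule linorder_injI)
  fix m n :: nat assume "m < n"
  then show "gen_out G L x m \<noteq> gen_out G L x n"
    using assms unfolding element_based_def by (metis image_eqI lessThan_iff)
qed

lemma eventually_inj_notin_finite:
  assumes "inj f" "finite A"
  shows "\<forall>\<^sub>F n in sequentially. f n \<notin> A"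
  using assms by (simp add: cofinite_eq_sequentially[symmetric] eventually_cofinite finite_vimageI
      flip: vimage_def)

lemma generates_density_tolerant_finite_variants:
  assumes "insert_invariant mu" "element_based G" "collection L"
    and exact: "generates_density mu rho enum_exact G (finite_variants L)"
  shows "generates_density mu rho enum_tolerant (\<lambda>L xs. G (finite_variants L) xs) L"
  unfolding generates_density_def gen_out_def
proof (intro ballI allI impI)
  fix K x assume "K \<in> range L" and "enum_tolerant K x"
  then obtain i where K: "K = L i" by blast
  have "infinite K" using \<open>collection L\<close> K unfolding collection_def by simp
  have x: "inj x" "finite (K - range x)" "finite (range x - K)"
    using \<open>enum_tolerant K x\<close> enum_tolerant_iff by blast+
  define out where "out = gen_out G (finite_variants L) x"
  have "range x = (L i - (K - range x)) \<union> (range x - K)" using K by auto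
  then have "range x \<in> range (finite_variants L)"
    using finite_modification_in_finite_variants x(2,3) by metis
  moreover have "enum_exact (range x) x" unfolding enum_exact_def using x(1) by simp
  ultimately have "(\<exists>n0. \<forall>n\<ge>n0. out n \<in> range x) \<and> ereal rho \<le> mu (range out) (range x)"
    using exact unfolding generates_density_def out_def by blast
  moreover have "\<forall>\<^sub>F n in sequentially. out n \<notin> range x - K"
    using eventually_inj_notin_finite[OF element_based_inj_gen_out[OF \<open>element_based G\<close>] x(3)]
    unfolding out_def .
  moreover have "mu (range out) (range x) = mu (range out) K"
    using insert_invariant_finite_modification[OF \<open>insert_invariant mu\<close> \<open>infinite K\<close> x(2,3)] .
  ultimately have "(\<exists>n0. \<forall>n\<ge>n0. out n \<in> K) \<and> ereal rho \<le> mu (range out) K"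
    unfolding eventually_sequentially by (metis (no_types, lifting) DiffI le_trans nat_le_linear)
  then show "(\<exists>n0. \<forall>n\<ge>n0. G (finite_variants L) (map x [0..<Suc n]) \<in> K) \<and>
      ereal rho \<le> mu (range (\<lambda>n. G (finite_variants L) (map x [0..<Suc n]))) K"
    unfolding out_def gen_out_def .
qed

lemma tolerant_generator_if_exact_generator:
  assumes "insert_invariant mu"
    and "\<exists>G. element_based G \<and> (\<forall>L. collection L \<longrightarrow> generates_density mu rho enum_exact G L)"
  shows "\<exists>G. element_based G \<and> (\<forall>L. collection L \<longrightarrow> generates_density mu rho enum_tolerant G L)"
proof -
  obtain G where G: "element_based G" "\<forall>L. collection L \<longrightarrow> generates_density mu rho enum_exact G L"
    using assms(2) by blast
  have "element_based (\<lambda>L xs. G (finite_variants L) xs)"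
    using G(1) unfolding element_based_def gen_out_def by blast
  moreover have "generates_density mu rho enum_tolerant (\<lambda>L xs. G (finite_variants L) xs) L"
    if "collection L" for L
    using generates_density_tolerant_finite_variants[OF assms(1) G(1) that]
      G(2) collection_finite_variants[OF that] by blast
  ultimately show ?thesis by blast
qed

theorem theorem6p17:
  fixes rho_up rho_low :: real
  assumes "0 \<le> rho_up" "rho_up \<le> 1" "0 \<le> rho_low" "rho_low \<le> 1"
  shows "((\<exists>G. element_based G \<and>
            (\<forall>L. collection L \<longrightarrow> generates_density mu_up rho_up enum_exact G L))
          \<longrightarrow> (\<exists>G. element_based G \<and>
            (\<forall>L. collection L \<longrightarrow> generates_density mu_up rho_up enum_tolerant G L)))
       \<and> ((\<exists>G. element_based G \<and>
            (\<forall>L. collection L \<longrightarrow> generates_density mu_low rho_low enum_exact G L))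
          \<longrightarrow> (\<exists>G. element_based G \<and>
            (\<forall>L. collection L \<longrightarrow> generates_density mu_low rho_low enum_tolerant G L)))"
  using tolerant_generator_if_exact_generator[OF insert_invariant_mu_up]
    tolerant_generator_if_exact_generator[OF insert_invariant_mu_low] by blast

end
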